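(* In the one-dimensional perturbed elephant random walk with stops, suppose $\epsilon+r\neq1$ and $\gamma=\frac{1-\epsilon}{2}$. Then for all $t\ge1$ $$\mathbb{E}[X_t^2]=\frac{t}{\epsilon+r}-\frac{1}{(\epsilon+r)\Gamma(1-\epsilon-r)}\,\frac{\Gamma(t+1-\epsilon-r)}{\Gamma(t)},$$ and hence $\displaystyle\lim_{t\to\infty}\frac{\mathbb{E}[X_t^2]}{t}=\frac{1}{\epsilon+r}$.
   Context: One-dimensional perturbed elephant random walk with stops (perturbed ERWS): fix $p,q,r\in(0,1)$ with $p+q+r=1$, $\epsilon\in(0,1)$ and $s\in(0,1)$, and set $\gamma=p-q$. The steps $\sigma_1,\sigma_2,\dots$ take values in $\{-1,0,1\}$, $X_0=0$ and $X_t=\sigma_1+\dots+\sigma_t$. The first step satisfies $P(\sigma_1=1)=s$, $P(\sigma_1=-1)=1-s$. For $t\ge1$, conditionally on $\sigma_1,\dots,\sigma_t$, an index $k\in\{1,\dots,t\}$ is chosen uniformly at random. If $\sigma_k=\pm1$, then $\sigma_{t+1}=\sigma_k$ with probability $p$, $\sigma_{t+1}=-\sigma_k$ with probability $q$, and $\sigma_{t+1}=0$ with probability $r$. If $\sigma_k=0$, then $\sigma_{t+1}=1$ with probability $\epsilon/2$, $\sigma_{t+1}=-1$ with probability $\epsilon/2$, and $\sigma_{t+1}=0$ with probability $1-\epsilon$. *)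

theory Defs
  imports "HOL-Probability.Probability"
begin

text \<open>Law of the next step given the step sigma_k picked uniformly from the past.\<close>
definition erws_resp :: "real \<Rightarrow> real \<Rightarrow> real \<Rightarrow> real \<Rightarrow> int \<Rightarrow> int pmf" where
  "erws_resp p q r eps x =
     (if x = 0 then pmf_of_list [(1, eps/2), (-1, eps/2), (0, 1 - eps)]
      else pmf_of_list [(x, p), (-x, q), (0, r)])"

definition erws_first :: "real \<Rightarrow> int pmf" where
  "erws_first s = map_pmf (\<lambda>b. if b then 1 else -1) (bernoulli_pmf s)"

primrec erws_steps :: "real \<Rightarrow> real \<Rightarrow> real \<Rightarrow> real \<Rightarrow> real \<Rightarrow> nat \<Rightarrow> int list pmf" where
  "erws_steps p q r eps s 0 = return_pmf []"
| "erws_steps p q r eps s (Suc t) =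
     bind_pmf (erws_steps p q r eps s t) (\<lambda>xs.
       map_pmf (\<lambda>y. xs @ [y])
         (if xs = [] then erws_first s
          else bind_pmf (pmf_of_set {..<length xs}) (\<lambda>k. erws_resp p q r eps (xs ! k))))"

definition erws_second_moment :: "real \<Rightarrow> real \<Rightarrow> real \<Rightarrow> real \<Rightarrow> real \<Rightarrow> nat \<Rightarrow> real" where
  "erws_second_moment p q r eps s t =
     measure_pmf.expectation (erws_steps p q r eps s t) (\<lambda>xs. (real_of_int (sum_list xs))^2)"

end

theory Submission
  imports Defs
begin

text \<open>Conditionally on the past \<open>\<sigma>\<^sub>1, \<dots>, \<sigma>\<^sub>t\<close>, the next step has mean \<open>\<gamma> X\<^sub>t / t\<close> and second
  moment \<open>\<epsilon> + (1 - r - \<epsilon>) N\<^sub>t / t\<close>, where \<open>N\<^sub>t\<close> counts the nonzero steps so far. Hence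
  \<open>m\<^sub>t = E[X\<^sub>t\<^sup>2]\<close> and \<open>n\<^sub>t = E[N\<^sub>t]\<close> satisfy the linear recurrences
  \<open>n\<^sub>t\<^sub>+\<^sub>1 = (1 + (1 - e) / t) n\<^sub>t + \<epsilon>\<close> and \<open>m\<^sub>t\<^sub>+\<^sub>1 = (1 + 2\<gamma> / t) m\<^sub>t + (1 - e) n\<^sub>t / t + \<epsilon>\<close> with
  \<open>e = \<epsilon> + r\<close>. Their homogeneous solutions are Gamma ratios \<open>\<Gamma>(t + c) / \<Gamma>(t)\<close>, so for
  \<open>2\<gamma> = 1 - \<epsilon>\<close> both recurrences are solved in closed form by induction, and
  \<open>\<Gamma>(t + 1 - e) / \<Gamma>(t) \<sim> t\<^sup>1\<^sup>-\<^sup>e = o(t)\<close> gives the limit.\<close>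

lemma pmf_expectation_cong:
  fixes f g :: "'a \<Rightarrow> real"
  assumes "\<And>x. x \<in> set_pmf M \<Longrightarrow> f x = g x"
  shows "measure_pmf.expectation M f = measure_pmf.expectation M g"
  using assms by (intro integral_cong_AE) (auto simp: AE_measure_pmf_iff)

lemma pmf_expectation_bind_finite:
  fixes h :: "'b \<Rightarrow> real"
  assumes "finite (set_pmf M)" "\<And>x. x \<in> set_pmf M \<Longrightarrow> finite (set_pmf (N x))"
  shows "measure_pmf.expectation (bind_pmf M N) h =
         measure_pmf.expectation M (\<lambda>x. measure_pmf.expectation (N x) h)"
  using pmf_expectation_bind[OF assms subset_refl, where h=h]
    integral_measure_pmf[OF assms(1), where M=M and f="\<lambda>x. measure_pmf.expectation (N x) h"]
  by (simp add: mult.commute)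

lemma Gamma_ratio_Suc:
  fixes x a :: real
  assumes "x > 0" "x + a > 0"
  shows "Gamma (x + 1 + a) / Gamma (x + 1) = Gamma (x + a) / Gamma x * ((x + a) / x)"
proof -
  have "Gamma (x + a + 1) = (x + a) * Gamma (x + a)" "Gamma (x + 1) = x * Gamma x"
    using assms by (auto intro!: Gamma_plus1 elim!: nonpos_Ints_cases')
  then show ?thesis
    using assms by (simp add: ac_simps)
qed

lemma not_nonpos_Int_if_gt_minus_one:
  fixes a :: real
  assumes "a > -1" "a \<noteq> 0"
  shows "a \<notin> \<int>\<^sub>\<le>\<^sub>0"
proof
  assume "a \<in> \<int>\<^sub>\<le>\<^sub>0"
  then obtain k :: nat where "a = - real k"
    by (auto elim!: nonpos_Ints_cases')
  with assms show False
    by (cases k) auto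
qed

text \<open>The ratio is \<open>\<Gamma>(a)\<close> divided by Gauss's product \<open>Gamma_series' a n\<close>, which tends to \<open>\<Gamma>(a)\<close>.\<close>
lemma Gamma_ratio_asymptotic:
  fixes a :: real
  assumes a: "a \<notin> \<int>\<^sub>\<le>\<^sub>0"
  shows "(\<lambda>n. Gamma (real n + a) / (Gamma (real n) * real n powr a)) \<longlonglongrightarrow> 1"
proof -
  have Gamma_a: "Gamma a \<noteq> 0"
    using a by (rule Gamma_nonzero)
  have "(\<lambda>n. Gamma a / Gamma_series' a n) \<longlonglongrightarrow> Gamma a / Gamma a"
    using Gamma_a by (intro tendsto_divide tendsto_const Gamma_series'_LIMSEQ)
  then have lim: "(\<lambda>n. Gamma a / Gamma_series' a n) \<longlonglongrightarrow> 1"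
    using Gamma_a by simp
  show ?thesis
  proof (rule Lim_transform_eventually[OF lim])
    show "\<forall>\<^sub>F n in sequentially.
        Gamma a / Gamma_series' a n = Gamma (real n + a) / (Gamma (real n) * real n powr a)"
      using eventually_gt_at_top[of "0::nat"]
    proof eventually_elim
      case (elim n)
      have "pochhammer a n \<noteq> 0"
        using a by (auto simp: pochhammer_eq_0_iff)
      moreover have "Gamma (real n) = fact (n - 1)"
        using elim Gamma_fact[of "n - 1"] by (simp add: of_nat_diff)
      ultimately show ?case
        using elim Gamma_a
        by (simp add: Gamma_series'_def pochhammer_Gamma[OF a] powr_def add_ac)
    qed
  qed
qed

lemma Gamma_ratio_over_n_tendsto_0:
  fixes a :: real
  assumes "a \<notin> \<int>\<^sub>\<le>\<^sub>0" "a < 1"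
  shows "(\<lambda>n. Gamma (real n + a) / Gamma (real n) / real n) \<longlonglongrightarrow> 0"
proof -
  have "(\<lambda>n. Gamma (real n + a) / (Gamma (real n) * real n powr a) * real n powr (a - 1))
      \<longlonglongrightarrow> 1 * 0"
    using assms filterlim_real_sequentially
    by (intro tendsto_mult Gamma_ratio_asymptotic tendsto_neg_powr) auto
  then have "(\<lambda>n. Gamma (real n + a) / (Gamma (real n) * real n powr a) * real n powr (a - 1))
      \<longlonglongrightarrow> 0"
    by simp
  then show ?thesis
  proof (rule Lim_transform_eventually)
    show "\<forall>\<^sub>F n in sequentially. Gamma (real n + a) / (Gamma (real n) * real n powr a)
        * real n powr (a - 1) = Gamma (real n + a) / Gamma (real n) / real n"
      using eventually_gt_at_top[of "0::nat"]
      by eventually_elim (simp add: powr_diff)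
  qed
qed

lemma Gamma_closed_form_over_n_tendsto:
  fixes m :: "nat \<Rightarrow> real" and a e K :: real
  assumes "a \<notin> \<int>\<^sub>\<le>\<^sub>0" "a < 1"
    and "\<forall>\<^sub>F n in sequentially. m n = n / e - K * (Gamma (real n + a) / Gamma n)"
  shows "(\<lambda>n. m n / n) \<longlonglongrightarrow> 1 / e"
proof -
  have "(\<lambda>n. 1 / e - K * (Gamma (real n + a) / Gamma (real n) / real n)) \<longlonglongrightarrow> 1 / e - K * 0"
    using assms(1,2) by (intro tendsto_intros Gamma_ratio_over_n_tendsto_0)
  then have "(\<lambda>n. 1 / e - K * (Gamma (real n + a) / Gamma (real n) / real n)) \<longlonglongrightarrow> 1 / e"
    by simp
  then show ?thesis
  proof (rule Lim_transform_eventually)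
    show "\<forall>\<^sub>F n in sequentially. 1 / e - K * (Gamma (real n + a) / Gamma (real n) / real n) = m n / n"
      using assms(3) eventually_gt_at_top[of "0::nat"]
      by eventually_elim (simp add: diff_divide_distrib)
  qed
qed

lemma affine_recurrence_closed_form:
  fixes u :: "nat \<Rightarrow> real" and e c :: real
  assumes "e < 2" "e \<noteq> 0" and u_1: "u 1 = 1"
    and u_Suc: "\<And>t. t \<ge> 1 \<Longrightarrow> u (Suc t) = (1 + (1 - e) / t) * u t + c"
    and "t \<ge> 1"
  shows "u t = c / e * t + (e - c) / (e * Gamma (2 - e)) * (Gamma (t + 1 - e) / Gamma t)"
proof -
  have Gamma_pos: "Gamma (2 - e) > 0"
    using assms(1) by (intro Gamma_real_pos) simp
  show ?thesis
    using \<open>t \<ge> 1\<close>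
  proof (induction t rule: dec_induct)
    case base
    have "c / e * 1 + (e - c) / (e * Gamma (2 - e)) * (Gamma (1 + 1 - e) / Gamma 1) = 1"
      using Gamma_pos assms(2) by (simp add: field_simps)
    then show ?case
      using u_1 by simp
  next
    case (step t)
    define G where "G = Gamma (real t + 1 - e) / Gamma t"
    have G_Suc: "Gamma (real (Suc t) + 1 - e) / Gamma (real (Suc t)) = G * ((real t + 1 - e) / t)"
      unfolding G_def using Gamma_ratio_Suc[of t "1 - e"] step.hyps assms(1)
      by (simp add: algebra_simps)
    have "u (Suc t) = (1 + (1 - e) / t) * (c / e * t + (e - c) / (e * Gamma (2 - e)) * G) + c"
      using u_Suc[OF step.hyps(1)] step.IH unfolding G_def by simp
    also have "\<dots> = c / e * (real t + 1) + (e - c) / (e * Gamma (2 - e)) * (G * ((real t + 1 - e) / t))"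
      using step.hyps assms(2) Gamma_pos by (simp add: field_simps)
    finally show ?case
      unfolding G_Suc by simp
  qed
qed

text \<open>The initial value \<open>m 1 = 1\<close> makes the coefficient of the homogeneous solution
  \<open>\<Gamma>(t + 1 - eps) / \<Gamma>(t)\<close> vanish.\<close>
lemma coupled_recurrence_closed_form:
  fixes m n :: "nat \<Rightarrow> real" and e eps :: real
  assumes "e < 2" "e \<noteq> 0" "e \<noteq> 1" and m_1: "m 1 = 1"
    and m_Suc: "\<And>t. t \<ge> 1 \<Longrightarrow> m (Suc t) = (1 + (1 - eps) / t) * m t + ((1 - e) / t) * n t + eps"
    and n_eq: "\<And>t. t \<ge> 1 \<Longrightarrow>
      n t = eps / e * t + (e - eps) / (e * Gamma (2 - e)) * (Gamma (t + 1 - e) / Gamma t)"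
    and "t \<ge> 1"
  shows "m t = t / e - 1 / (e * Gamma (1 - e)) * (Gamma (t + 1 - e) / Gamma t)"
proof -
  define K where "K = 1 / (e * Gamma (1 - e))"
  define X where "X = (e - eps) / (e * Gamma (2 - e))"
  have "1 - e \<notin> \<int>\<^sub>\<le>\<^sub>0"
    using assms(1,3) by (intro not_nonpos_Int_if_gt_minus_one) auto
  then have Gamma_2_minus_e: "Gamma (2 - e) = (1 - e) * Gamma (1 - e)"
    and Gamma_1_minus_e: "Gamma (1 - e) \<noteq> 0"
    using Gamma_plus1[of "1 - e"] by (simp_all add: Gamma_eq_zero_iff)
  then have coeff: "(1 - e) * X = (e - eps) * K"
    unfolding K_def X_def using assms(3) by simp
  show ?thesis
    using \<open>t \<ge> 1\<close>
  proof (induction t rule: dec_induct)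
    case base
    have "1 / e * 1 - K * (Gamma (1 + 1 - e) / Gamma 1) = 1"
      unfolding K_def using Gamma_2_minus_e Gamma_1_minus_e assms(2,3)
      by (simp add: field_simps)
    then show ?case
      using m_1 unfolding K_def by simp
  next
    case (step t)
    define G where "G = Gamma (real t + 1 - e) / Gamma t"
    have G_Suc: "Gamma (real (Suc t) + 1 - e) / Gamma (real (Suc t)) = G * ((real t + 1 - e) / t)"
      unfolding G_def using Gamma_ratio_Suc[of t "1 - e"] step.hyps assms(1)
      by (simp add: algebra_simps)
    have "m (Suc t) = (1 + (1 - eps) / t) * (t / e - K * G)
        + ((1 - e) / t) * (eps / e * t + X * G) + eps"
      using m_Suc[OF step.hyps(1)] n_eq[OF step.hyps(1)] step.IH unfolding G_def K_def X_def by simp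
    also have "\<dots> = (1 + (1 - eps) / t) * (t / e - K * G)
        + (1 - e) * eps / e + ((1 - e) * X) * G / t + eps"
      using step.hyps by (simp add: field_simps)
    also have "\<dots> = (1 + (1 - eps) / t) * (t / e - K * G)
        + (1 - e) * eps / e + (e - eps) * K * G / t + eps"
      unfolding coeff ..
    also have "\<dots> = (real t + 1) / e - K * (G * ((real t + 1 - e) / t))"
      using step.hyps assms(2) by (simp add: field_simps)
    finally show ?case
      unfolding G_Suc K_def by simp
  qed
qed

locale erws =
  fixes p q r eps s :: real
  assumes p_nonneg: "0 \<le> p" and q_nonneg: "0 \<le> q" and r_nonneg: "0 \<le> r"
    and pqr_sum: "p + q + r = 1"
    and eps_nonneg: "0 \<le> eps" and eps_le_1: "eps \<le> 1"
    and s_nonneg: "0 \<le> s" and s_le_1: "s \<le> 1"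
begin

lemma erws_resp_wf:
  "pmf_of_list_wf [(1::int, eps/2), (-1, eps/2), (0, 1 - eps)]"
  "pmf_of_list_wf [(x::int, p), (-x, q), (0, r)]"
  using eps_nonneg eps_le_1 p_nonneg q_nonneg r_nonneg pqr_sum
  by (auto intro!: pmf_of_list_wfI)

lemma set_pmf_erws_resp: "set_pmf (erws_resp p q r eps x) \<subseteq> {1, -1, 0, x, -x}"
  unfolding erws_resp_def
  using set_pmf_of_list[OF erws_resp_wf(1)] set_pmf_of_list[OF erws_resp_wf(2), of x] by auto

lemma expectation_erws_resp:
  fixes h :: "int \<Rightarrow> real"
  assumes "x \<in> {-1, 0, 1}"
  shows "measure_pmf.expectation (erws_resp p q r eps x) h =
    (if x = 0 then eps/2 * h 1 + eps/2 * h (-1) + (1 - eps) * h 0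
     else p * h x + q * h (-x) + r * h 0)"
proof -
  have "measure_pmf.expectation (erws_resp p q r eps x) h =
        (\<Sum>y\<in>{-1, 0, 1}. h y * pmf (erws_resp p q r eps x) y)"
    using set_pmf_erws_resp[of x] assms by (intro integral_measure_pmf_real) auto
  then show ?thesis
    using assms by (auto simp: erws_resp_def pmf_pmf_of_list erws_resp_wf algebra_simps)
qed

lemma expectation_erws_resp_quadratic:
  assumes "x \<in> {-1, 0, 1}"
  shows "measure_pmf.expectation (erws_resp p q r eps x) (\<lambda>y. a + b * of_int y + c * (of_int y)\<^sup>2) =
    a + b * (p - q) * of_int x + c * (eps + (1 - r - eps) * (of_int x)\<^sup>2)"
proof -
  have "a * p + a * q + a * r = a" "c * p + c * q + c * r = c"
    using pqr_sum by (simp_all flip: distrib_left)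
  then show ?thesis
    using assms by (subst expectation_erws_resp) (auto simp: field_simps)
qed

lemma set_pmf_erws_steps:
  "set_pmf (erws_steps p q r eps s t) \<subseteq> {xs. set xs \<subseteq> {-1, 0, 1} \<and> length xs = t}"
proof (induction t)
  case 0
  then show ?case by simp
next
  case (Suc t)
  show ?case
  proof
    fix ys assume "ys \<in> set_pmf (erws_steps p q r eps s (Suc t))"
    then obtain xs y where xs: "xs \<in> set_pmf (erws_steps p q r eps s t)" and ys: "ys = xs @ [y]"
      and y: "y \<in> set_pmf (if xs = [] then erws_first s
          else bind_pmf (pmf_of_set {..<length xs}) (\<lambda>k. erws_resp p q r eps (xs ! k)))"
      by auto
    have xs_steps: "set xs \<subseteq> {-1, 0, 1}" "length xs = t"
      using xs Suc.IH by auto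
    have "y \<in> {-1, 0, 1}"
    proof (cases "xs = []")
      case True
      then show ?thesis using y by (auto simp: erws_first_def)
    next
      case False
      then have "{..<length xs} \<noteq> {}" by auto
      then obtain k where "k < length xs" "y \<in> set_pmf (erws_resp p q r eps (xs ! k))"
        using y False by auto
      moreover from \<open>k < length xs\<close> have "xs ! k \<in> {-1, 0, 1}"
        using xs_steps nth_mem by blast
      ultimately show ?thesis using set_pmf_erws_resp[of "xs ! k"] by auto
    qed
    with xs_steps ys show "ys \<in> {xs. set xs \<subseteq> {-1, 0, 1} \<and> length xs = Suc t}"
      by auto
  qed
qed

lemma finite_set_pmf_erws_steps: "finite (set_pmf (erws_steps p q r eps s t))"
  by (rule finite_subset[OF set_pmf_erws_steps]) (simp add: finite_lists_length_eq)

lemma expectation_erws_steps_Suc: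
  fixes F :: "int list \<Rightarrow> real"
  assumes "t \<ge> 1"
  shows "measure_pmf.expectation (erws_steps p q r eps s (Suc t)) F =
    measure_pmf.expectation (erws_steps p q r eps s t)
      (\<lambda>xs. (\<Sum>k<t. measure_pmf.expectation (erws_resp p q r eps (xs ! k)) (\<lambda>y. F (xs @ [y]))) / t)"
proof -
  have fin_resp: "finite (set_pmf (erws_resp p q r eps x))" for x
    by (rule finite_subset[OF set_pmf_erws_resp]) auto
  have "measure_pmf.expectation (erws_steps p q r eps s (Suc t)) F =
    measure_pmf.expectation (erws_steps p q r eps s t) (\<lambda>xs.
      measure_pmf.expectation (if xs = [] then erws_first s
          else bind_pmf (pmf_of_set {..<length xs}) (\<lambda>k. erws_resp p q r eps (xs ! k)))
        (\<lambda>y. F (xs @ [y])))"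
    using fin_resp by (simp add: pmf_expectation_bind_finite finite_set_pmf_erws_steps
        erws_first_def lessThan_empty_iff)
  also have "\<dots> = measure_pmf.expectation (erws_steps p q r eps s t)
      (\<lambda>xs. (\<Sum>k<t. measure_pmf.expectation (erws_resp p q r eps (xs ! k)) (\<lambda>y. F (xs @ [y]))) / t)"
  proof (rule pmf_expectation_cong)
    fix xs assume "xs \<in> set_pmf (erws_steps p q r eps s t)"
    then have "length xs = t" using set_pmf_erws_steps[of t] by auto
    with assms show "measure_pmf.expectation (if xs = [] then erws_first s
          else bind_pmf (pmf_of_set {..<length xs}) (\<lambda>k. erws_resp p q r eps (xs ! k)))
        (\<lambda>y. F (xs @ [y])) =
      (\<Sum>k<t. measure_pmf.expectation (erws_resp p q r eps (xs ! k)) (\<lambda>y. F (xs @ [y]))) / t"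
      using fin_resp by (auto simp: pmf_expectation_bind_pmf_of_set lessThan_empty_iff
          divide_inverse_commute simp flip: sum_distrib_left)
  qed
  finally show ?thesis .
qed

lemma expectation_erws_steps_Suc_quadratic:
  fixes F :: "int list \<Rightarrow> real"
  assumes "t \<ge> 1"
    and F: "\<And>xs y. F (xs @ [y]) = a xs + b xs * of_int y + c xs * (of_int y)\<^sup>2"
  shows "measure_pmf.expectation (erws_steps p q r eps s (Suc t)) F =
    measure_pmf.expectation (erws_steps p q r eps s t) (\<lambda>xs. a xs
      + b xs * (p - q) * of_int (sum_list xs) / t
      + c xs * (eps + (1 - r - eps) * (\<Sum>x\<leftarrow>xs. (of_int x)\<^sup>2) / t))"
  unfolding expectation_erws_steps_Suc[OF assms(1)]
proof (rule pmf_expectation_cong)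
  fix xs assume "xs \<in> set_pmf (erws_steps p q r eps s t)"
  then have len: "length xs = t" and "set xs \<subseteq> {-1, 0, 1}"
    using set_pmf_erws_steps[of t] by auto
  then have vals: "xs ! k \<in> {-1, 0, 1}" if "k < t" for k
    using that by (metis nth_mem subsetD)
  have sum_nth: "(\<Sum>k<t. f (xs ! k)) = (\<Sum>x\<leftarrow>xs. f x)" for f :: "int \<Rightarrow> real"
    using len by (simp add: sum_list_sum_nth atLeast0LessThan)
  define R where "R = 1 - r - eps"
  have "(\<Sum>k<t. measure_pmf.expectation (erws_resp p q r eps (xs ! k)) (\<lambda>y. F (xs @ [y]))) =
      (\<Sum>k<t. a xs + b xs * (p - q) * of_int (xs ! k) + c xs * (eps + R * (of_int (xs ! k))\<^sup>2))"
    using vals by (intro sum.cong) (simp_all add: F expectation_erws_resp_quadratic R_def)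
  also have "\<dots> = t * a xs + b xs * (p - q) * (\<Sum>x\<leftarrow>xs. of_int x)
      + c xs * (t * eps + R * (\<Sum>x\<leftarrow>xs. (of_int x)\<^sup>2))"
    using sum_nth[of real_of_int] sum_nth[of "\<lambda>x. (real_of_int x)\<^sup>2"]
    by (simp add: sum.distrib flip: sum_distrib_left)
  finally have sum_eq: "(\<Sum>k<t. measure_pmf.expectation (erws_resp p q r eps (xs ! k)) (\<lambda>y. F (xs @ [y])))
      = t * a xs + b xs * (p - q) * (\<Sum>x\<leftarrow>xs. of_int x) + c xs * (t * eps + R * (\<Sum>x\<leftarrow>xs. (of_int x)\<^sup>2))" .
  have "(t * a xs + b xs * (p - q) * (\<Sum>x\<leftarrow>xs. of_int x) + c xs * (t * eps + R * (\<Sum>x\<leftarrow>xs. (of_int x)\<^sup>2))) / t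
      = a xs + b xs * (p - q) * of_int (sum_list xs) / t
      + c xs * (eps + (1 - r - eps) * (\<Sum>x\<leftarrow>xs. (of_int x)\<^sup>2) / t)"
    using assms(1) by (simp add: R_def field_simps flip: sum_list_of_int)
  with sum_eq show "(\<Sum>k<t. measure_pmf.expectation (erws_resp p q r eps (xs ! k)) (\<lambda>y. F (xs @ [y]))) / t =
      a xs + b xs * (p - q) * of_int (sum_list xs) / t
      + c xs * (eps + (1 - r - eps) * (\<Sum>x\<leftarrow>xs. (of_int x)\<^sup>2) / t)"
    by metis
qed

text \<open>Since \<open>\<sigma>\<^sup>2 = 1\<close> exactly for \<open>\<sigma> \<noteq> 0\<close>, \<open>erws_moves t\<close> is the expected number of nonzero
  steps among the first \<open>t\<close>.\<close>
definition erws_moves :: "nat \<Rightarrow> real" where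
  "erws_moves t = measure_pmf.expectation (erws_steps p q r eps s t) (\<lambda>xs. \<Sum>x\<leftarrow>xs. (of_int x)\<^sup>2)"

lemma expectation_erws_steps_affine:
  fixes f g :: "int list \<Rightarrow> real"
  shows "measure_pmf.expectation (erws_steps p q r eps s t) (\<lambda>xs. u * f xs + v * g xs + w) =
   u * measure_pmf.expectation (erws_steps p q r eps s t) f
   + v * measure_pmf.expectation (erws_steps p q r eps s t) g + w"
  by (simp add: integrable_measure_pmf_finite finite_set_pmf_erws_steps)

lemma erws_moves_Suc:
  assumes "t \<ge> 1"
  shows "erws_moves (Suc t) = (1 + (1 - r - eps) / t) * erws_moves t + eps"
proof -
  have "erws_moves (Suc t) = measure_pmf.expectation (erws_steps p q r eps s t)
      (\<lambda>xs. (1 + (1 - r - eps) / t) * (\<Sum>x\<leftarrow>xs. (of_int x)\<^sup>2) + 0 * 0 + eps)"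
    unfolding erws_moves_def
    by (subst expectation_erws_steps_Suc_quadratic[OF assms,
          where a = "\<lambda>xs. \<Sum>x\<leftarrow>xs. (of_int x)\<^sup>2" and b = "\<lambda>_. 0" and c = "\<lambda>_. 1"])
      (simp_all add: algebra_simps add_divide_distrib)
  then show ?thesis
    unfolding erws_moves_def expectation_erws_steps_affine by simp
qed

lemma erws_second_moment_Suc:
  assumes "t \<ge> 1"
  shows "erws_second_moment p q r eps s (Suc t) =
    (1 + 2 * (p - q) / t) * erws_second_moment p q r eps s t + ((1 - r - eps) / t) * erws_moves t + eps"
proof -
  have "erws_second_moment p q r eps s (Suc t) = measure_pmf.expectation (erws_steps p q r eps s t)
      (\<lambda>xs. (1 + 2 * (p - q) / t) * (of_int (sum_list xs))\<^sup>2
        + ((1 - r - eps) / t) * (\<Sum>x\<leftarrow>xs. (of_int x)\<^sup>2) + eps)"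
    unfolding erws_second_moment_def
    by (subst expectation_erws_steps_Suc_quadratic[OF assms,
          where a = "\<lambda>xs. (of_int (sum_list xs))\<^sup>2" and b = "\<lambda>xs. 2 * of_int (sum_list xs)"
          and c = "\<lambda>_. 1"])
      (simp_all add: power2_eq_square algebra_simps add_divide_distrib)
  then show ?thesis
    unfolding erws_second_moment_def erws_moves_def expectation_erws_steps_affine .
qed

lemma erws_second_moment_1: "erws_second_moment p q r eps s 1 = 1"
  and erws_moves_1: "erws_moves 1 = 1"
  using s_nonneg s_le_1
  by (simp_all add: erws_second_moment_def erws_moves_def erws_first_def bind_return_pmf)

lemma erws_moves_closed_form:
  assumes "eps + r \<noteq> 0" "eps + r < 2" "t \<ge> 1"
  shows "erws_moves t = eps / (eps + r) * t
    + r / ((eps + r) * Gamma (2 - eps - r)) * (Gamma (real t + 1 - eps - r) / Gamma t)"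
proof -
  have "erws_moves t = eps / (eps + r) * t
      + (eps + r - eps) / ((eps + r) * Gamma (2 - (eps + r))) * (Gamma (real t + 1 - (eps + r)) / Gamma t)"
    using assms erws_moves_1 erws_moves_Suc
    by (intro affine_recurrence_closed_form) (simp_all add: algebra_simps)
  then show ?thesis
    by (simp add: algebra_simps)
qed

lemma erws_second_moment_closed_form:
  assumes "eps + r \<noteq> 0" "eps + r \<noteq> 1" "eps + r < 2" "2 * (p - q) = 1 - eps" "t \<ge> 1"
  shows "erws_second_moment p q r eps s t = t / (eps + r)
    - 1 / ((eps + r) * Gamma (1 - eps - r)) * (Gamma (real t + 1 - eps - r) / Gamma t)"
proof -
  have "erws_second_moment p q r eps s t = t / (eps + r)
      - 1 / ((eps + r) * Gamma (1 - (eps + r))) * (Gamma (real t + 1 - (eps + r)) / Gamma t)"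
  proof (rule coupled_recurrence_closed_form[where n = erws_moves])
    fix k :: nat assume "k \<ge> 1"
    show "erws_second_moment p q r eps s (Suc k) = (1 + (1 - eps) / k) * erws_second_moment p q r eps s k
        + ((1 - (eps + r)) / k) * erws_moves k + eps"
      using erws_second_moment_Suc[OF \<open>k \<ge> 1\<close>] assms(4) by (simp add: diff_diff_eq add.commute)
    show "erws_moves k = eps / (eps + r) * k
        + (eps + r - eps) / ((eps + r) * Gamma (2 - (eps + r))) * (Gamma (real k + 1 - (eps + r)) / Gamma k)"
      using erws_moves_closed_form[OF assms(1,3) \<open>k \<ge> 1\<close>] by (simp add: diff_diff_eq)
  qed (use assms erws_second_moment_1 in auto)
  then show ?thesis
    by (simp add: diff_diff_eq)
qed

end

theorem mainTheorem7:
  fixes p q r eps s :: real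
  assumes "0 < p" "p < 1" "0 < q" "q < 1" "0 < r" "r < 1" "p + q + r = 1"
    and "0 < eps" "eps < 1" and "0 < s" "s < 1"
    and "eps + r \<noteq> 1"
    and "p - q = (1 - eps) / 2"
  shows "(\<forall>t::nat. t \<ge> 1 \<longrightarrow>
            erws_second_moment p q r eps s t =
              real t / (eps + r)
              - 1 / ((eps + r) * Gamma (1 - eps - r)) * (Gamma (real t + 1 - eps - r) / Gamma (real t)))
       \<and> ((\<lambda>t. erws_second_moment p q r eps s t / real t) \<longlonglongrightarrow> 1 / (eps + r))"
proof -
  interpret erws p q r eps s
    using assms by unfold_locales auto
  have closed_form: "\<forall>t::nat. t \<ge> 1 \<longrightarrow> erws_second_moment p q r eps s t = real t / (eps + r)
      - 1 / ((eps + r) * Gamma (1 - eps - r)) * (Gamma (real t + 1 - eps - r) / Gamma (real t))"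
    by (intro allI impI erws_second_moment_closed_form) (use assms in auto)
  moreover have "(\<lambda>t. erws_second_moment p q r eps s t / real t) \<longlonglongrightarrow> 1 / (eps + r)"
  proof (rule Gamma_closed_form_over_n_tendsto)
    show "1 - eps - r \<notin> \<int>\<^sub>\<le>\<^sub>0"
      using assms by (intro not_nonpos_Int_if_gt_minus_one) auto
    show "1 - eps - r < 1"
      using assms by simp
    show "\<forall>\<^sub>F t in sequentially. erws_second_moment p q r eps s t = real t / (eps + r)
        - 1 / ((eps + r) * Gamma (1 - eps - r)) * (Gamma (real t + (1 - eps - r)) / Gamma (real t))"
      using eventually_ge_at_top[of "1::nat"]
      by eventually_elim (use closed_form in \<open>simp add: add_diff_eq\<close>)
  qed
  ultimately show ?thesis ..
qed

end
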